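(* Let $G=(V,E)$ be a simple graph on $n$ vertices and let $\bar G$ be its complement. Then $\varepsilon(G)$ is at most the number of acyclic orientations of the edges of $\bar G$. Equality holds if and only if $G$ is a complete $p$-partite graph for some $p\in[n]$.
   Context: For an undirected simple graph $G=(V,E)$, $\varepsilon(G)$ denotes the maximum, over all acyclic orientations of $E$, of the number of linear extensions of the partial order induced on $V$ (where $u<v$ iff there is a directed path from $u$ to $v$; a linear extension of a poset on an $n$-element set is an order-preserving bijection onto $[n]$). A complete $p$-partite graph is one whose vertex set is partitioned into $p$ nonempty parts, with two vertices adjacent iff they lie in different parts. *)

theory Defs
  imports Main "HOL-Library.Disjoint_Sets"
begin

text \<open>A simple graph on a finite vertex set V is given by a symmetric, irreflexive
edge relation E \<subseteq> V \<times> V (each undirected edge {u,v} is represented by both (u,v) and (v,u)).\<close>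

definition simple_graph :: "'a set \<Rightarrow> ('a \<times> 'a) set \<Rightarrow> bool" where
  "simple_graph V E \<longleftrightarrow> finite V \<and> E \<subseteq> V \<times> V \<and> sym E \<and> irrefl E"

definition compl_graph :: "'a set \<Rightarrow> ('a \<times> 'a) set \<Rightarrow> ('a \<times> 'a) set" where
  "compl_graph V E = {(u, v). u \<in> V \<and> v \<in> V \<and> u \<noteq> v \<and> (u, v) \<notin> E}"

definition orientation :: "('a \<times> 'a) set \<Rightarrow> ('a \<times> 'a) set \<Rightarrow> bool" where
  "orientation E R \<longleftrightarrow> R \<subseteq> E \<and> (\<forall>u v. (u, v) \<in> E \<longrightarrow> ((u, v) \<in> R \<longleftrightarrow> (v, u) \<notin> R))"

definition acyclic_orientations :: "('a \<times> 'a) set \<Rightarrow> ('a \<times> 'a) set set" where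
  "acyclic_orientations E = {R. orientation E R \<and> acyclic R}"

text \<open>Linear extensions of the poset on V induced by R (u < v iff there is a directed
path from u to v, i.e. (u,v) in the transitive closure of R): order-preserving bijections V \<rightarrow> {1..n},
taken extensionally (undefined outside V).\<close>
definition linear_extensions :: "'a set \<Rightarrow> ('a \<times> 'a) set \<Rightarrow> ('a \<Rightarrow> nat) set" where
  "linear_extensions V R =
     {f. bij_betw f V {1..card V} \<and> (\<forall>x. x \<notin> V \<longrightarrow> f x = undefined)
         \<and> (\<forall>u\<in>V. \<forall>v\<in>V. (u, v) \<in> R\<^sup>+ \<longrightarrow> f u < f v)}"

definition eps :: "'a set \<Rightarrow> ('a \<times> 'a) set \<Rightarrow> nat" where
  "eps V E = Max ((\<lambda>R. card (linear_extensions V R)) ` acyclic_orientations E)"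

definition complete_multipartite :: "'a set \<Rightarrow> ('a \<times> 'a) set \<Rightarrow> nat \<Rightarrow> bool" where
  "complete_multipartite V E p \<longleftrightarrow>
     (\<exists>P. partition_on V P \<and> finite P \<and> card P = p \<and>
          (\<forall>u\<in>V. \<forall>v\<in>V. (u, v) \<in> E \<longleftrightarrow> \<not> (\<exists>B\<in>P. u \<in> B \<and> v \<in> B)))"

end

theory Submission
  imports Defs "HOL-Library.Product_Lexorder"
begin

text \<open>
  Let R be an acyclic orientation of the edges E of a simple graph G on V.  Every linear
  extension f of R, read as a ranking of V, orients each edge of the complement graph from
  its smaller to its larger end; this gives an acyclic orientation of the complement, and
  the map is injective because f is determined by the relative order of all pairs of
  vertices.

  Next,
  complete multipartite graphs are characterised by transitivity of non-adjacency.  If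
  non-adjacency is transitive, orienting G by part label makes the injection onto; if not,
  a path u - v - w of non-edges over an edge uw yields an orientation of the complement
  that is missed by every R.
\<close>

definition induced_orientation :: "('a \<Rightarrow> 'b::linorder) \<Rightarrow> ('a \<times> 'a) set \<Rightarrow> ('a \<times> 'a) set" where
  "induced_orientation g S = {(x, y) \<in> S. g x < g y}"

text \<open>Ranks strictly increase along directed paths, so an induced orientation has no cycle.\<close>

lemma acyclic_induced_orientation: "acyclic (induced_orientation g S)"
proof -
  have "g x < g y" if "(x, y) \<in> (induced_orientation g S)\<^sup>+" for x y
    using that by (induction rule: trancl_induct) (auto simp: induced_orientation_def)
  then show ?thesis by (auto simp: acyclic_def)
qed

lemma induced_orientation_in_acyclic_orientations:
  assumes "sym S" and "\<And>x y. (x, y) \<in> S \<Longrightarrow> g x \<noteq> g y"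
  shows "induced_orientation g S \<in> acyclic_orientations S"
proof -
  have "(y, x) \<in> S" if "(x, y) \<in> S" for x y
    using that assms(1) by (auto simp: sym_def)
  then have "orientation S (induced_orientation g S)"
    using assms(2) by (fastforce simp: orientation_def induced_orientation_def)
  then show ?thesis
    by (simp add: acyclic_orientations_def acyclic_induced_orientation)
qed

lemma induced_orientation_eq:
  assumes "orientation S Q" and "\<And>x y. (x, y) \<in> Q \<Longrightarrow> g x < g y"
  shows "induced_orientation g S = Q"
proof -
  have "(y, x) \<in> Q" if "(x, y) \<in> S" "(x, y) \<notin> Q" for x y
    using assms(1) that unfolding orientation_def by blast
  then show ?thesis using assms unfolding orientation_def induced_orientation_def
    by (fastforce dest: less_asym)
qed

lemma finite_acyclic_orientations: "finite S \<Longrightarrow> finite (acyclic_orientations S)"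
  unfolding acyclic_orientations_def orientation_def
  by (rule finite_subset[of _ "Pow S"]) auto

lemma rank_of_bij:
  assumes "finite V" "bij_betw f V {1..card V}" "u \<in> V"
  shows "f u = card {v \<in> V. f v \<le> f u}"
proof -
  have inj: "inj_on f {v \<in> V. f v \<le> f u}"
    using assms(2) by (auto simp: bij_betw_def inj_on_def)
  have im: "f ` V = {1..card V}" using assms(2) by (simp add: bij_betw_def)
  then have "f u \<le> card V" using assms(3) by auto
  have "f ` {v \<in> V. f v \<le> f u} = {k \<in> f ` V. k \<le> f u}" by auto
  also have "\<dots> = {1..f u}" using im \<open>f u \<le> card V\<close> by auto
  finally show ?thesis using card_image[OF inj] by simp
qed

lemma bij_eq_if_same_order:
  assumes "finite V" "bij_betw f V {1..card V}" "bij_betw g V {1..card V}"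
    and "\<And>u v. u \<in> V \<Longrightarrow> v \<in> V \<Longrightarrow> f u < f v \<longleftrightarrow> g u < g v" and "u \<in> V"
  shows "f u = g u"
proof -
  have "{v \<in> V. f v \<le> f u} = {v \<in> V. g v \<le> g u}"
    using assms(4,5) by (auto simp: not_less[symmetric])
  then show ?thesis using rank_of_bij[OF assms(1,2,5)] rank_of_bij[OF assms(1,3,5)] by simp
qed

lemma rank_compression:
  fixes g :: "'a \<Rightarrow> 'b::linorder"
  assumes "finite V" "inj_on g V"
  obtains f where "bij_betw f V {1..card V}"
    and "\<And>x y. x \<in> V \<Longrightarrow> y \<in> V \<Longrightarrow> g x < g y \<Longrightarrow> f x < f y"
proof -
  define f where "f x = card {z \<in> V. g z \<le> g x}" for x
  have mono: "f x < f y" if "x \<in> V" "y \<in> V" "g x < g y" for x y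
  proof -
    have "y \<in> {z \<in> V. g z \<le> g y} - {z \<in> V. g z \<le> g x}" using that by auto
    then have "{z \<in> V. g z \<le> g x} \<subset> {z \<in> V. g z \<le> g y}"
      using that by (auto intro: order.trans)
    then show ?thesis unfolding f_def using assms(1) by (simp add: psubset_card_mono)
  qed
  have inj: "inj_on f V"
  proof (rule inj_onI)
    fix x y assume "x \<in> V" "y \<in> V" "f x = f y"
    then show "x = y" using mono[of x y] mono[of y x] assms(2)
      by (metis inj_onD less_irrefl linorder_neqE)
  qed
  have "f x \<in> {1..card V}" if "x \<in> V" for x
  proof -
    have "x \<in> {z \<in> V. g z \<le> g x}" using that by simp
    then have "0 < f x" unfolding f_def using assms(1) by (auto simp: card_gt_0_iff)
    moreover have "f x \<le> card V" unfolding f_def using assms(1) by (intro card_mono) auto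
    ultimately show ?thesis by simp
  qed
  then have "f ` V = {1..card V}"
    using card_image[OF inj] by (intro card_subset_eq) auto
  with inj have "bij_betw f V {1..card V}" by (simp add: bij_betw_def)
  with mono show ?thesis using that by blast
qed

lemma predecessors_grow:
  assumes "finite V" "T \<subseteq> V \<times> V" "acyclic T" "(x, y) \<in> T\<^sup>+"
  shows "card {z. (z, x) \<in> T\<^sup>+} < card {z. (z, y) \<in> T\<^sup>+}"
proof (rule psubset_card_mono)
  show "finite {z. (z, y) \<in> T\<^sup>+}"
    using trancl_subset_Sigma[OF assms(2)] assms(1) by (auto intro: finite_subset)
  have "(x, x) \<notin> T\<^sup>+" using assms(3) by (simp add: acyclic_def)
  then show "{z. (z, x) \<in> T\<^sup>+} \<subset> {z. (z, y) \<in> T\<^sup>+}"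
    using assms(4) by (auto intro: trancl_trans)
qed

text \<open>Topological sorting: every acyclic relation on a finite set has a linear extension.
  Rank by number of predecessors, break ties by an arbitrary injection, and compress.\<close>

lemma topological_sort:
  assumes "finite V" "T \<subseteq> V \<times> V" "acyclic T"
  obtains f where "f \<in> linear_extensions V T"
proof -
  obtain idx :: "'a \<Rightarrow> nat" where idx: "inj_on idx V"
    using finite_imp_inj_to_nat_seg[OF assms(1)] by blast
  define g where "g x = (card {z. (z, x) \<in> T\<^sup>+}, idx x)" for x
  have "inj_on g V" using idx by (auto simp: g_def inj_on_def)
  then obtain f where f: "bij_betw f V {1..card V}"
    and mono: "\<And>x y. x \<in> V \<Longrightarrow> y \<in> V \<Longrightarrow> g x < g y \<Longrightarrow> f x < f y"
    using rank_compression[OF assms(1)] by blast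
  define f' where "f' x = (if x \<in> V then f x else undefined)" for x
  have "bij_betw f' V {1..card V}"
    using f by (rule bij_betw_cong[THEN iffD1, rotated]) (simp add: f'_def)
  moreover have "f' u < f' v" if "u \<in> V" "v \<in> V" "(u, v) \<in> T\<^sup>+" for u v
    using that mono predecessors_grow[OF assms] by (simp add: f'_def g_def)
  ultimately have "f' \<in> linear_extensions V T"
    by (simp add: linear_extensions_def f'_def)
  then show ?thesis using that by blast
qed

lemma linear_extensions_antimono:
  "R \<subseteq> T \<Longrightarrow> linear_extensions V T \<subseteq> linear_extensions V R"
  unfolding linear_extensions_def using trancl_mono by blast

lemma linear_extension_increasing:
  assumes "f \<in> linear_extensions V T" "T \<subseteq> V \<times> V" "(u, v) \<in> T"
  shows "f u < f v"
  using assms unfolding linear_extensions_def by blast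

lemma compl_graph_props:
  assumes "simple_graph V E"
  shows "sym (compl_graph V E)" "compl_graph V E \<subseteq> V \<times> V" "finite (compl_graph V E)"
proof -
  show "sym (compl_graph V E)"
    using assms unfolding sym_def compl_graph_def simple_graph_def by auto
  show sub: "compl_graph V E \<subseteq> V \<times> V" unfolding compl_graph_def by auto
  show "finite (compl_graph V E)"
    using assms sub unfolding simple_graph_def by (meson finite_SigmaI finite_subset)
qed

lemma linear_extension_orients_complement:
  assumes "simple_graph V E" "f \<in> linear_extensions V R"
  shows "induced_orientation f (compl_graph V E) \<in> acyclic_orientations (compl_graph V E)"
proof (rule induced_orientation_in_acyclic_orientations[OF compl_graph_props(1)[OF assms(1)]])
  fix x y assume "(x, y) \<in> compl_graph V E"
  moreover have "inj_on f V" using assms(2) by (simp add: linear_extensions_def bij_betw_def)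
  ultimately show "f x \<noteq> f y" by (auto simp: compl_graph_def dest: inj_onD)
qed

text \<open>The central injection: for an orientation R of E, a linear extension f of R is determined
  by the orientation it induces on the complement, because the relative order of adjacent
  vertices is already fixed by R and that of non-adjacent ones is recorded by the induced
  orientation.\<close>

lemma inj_on_orient_complement:
  assumes "simple_graph V E" "orientation E R"
  shows "inj_on (\<lambda>f. induced_orientation f (compl_graph V E)) (linear_extensions V R)"
proof (rule inj_onI)
  fix f g assume f: "f \<in> linear_extensions V R" and g: "g \<in> linear_extensions V R"
    and eq: "induced_orientation f (compl_graph V E) = induced_orientation g (compl_graph V E)"
  have fin: "finite V" using assms(1) by (simp add: simple_graph_def)
  have same_order: "f u < f v \<longleftrightarrow> g u < g v" if uv: "u \<in> V" "v \<in> V" for u v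
  proof -
    consider "u = v" | "(u, v) \<in> R" | "(v, u) \<in> R" | "(u, v) \<in> compl_graph V E"
      using assms(2) uv unfolding orientation_def compl_graph_def by auto
    then show ?thesis
    proof cases
      case 2
      then have "(u, v) \<in> R\<^sup>+" by blast
      then show ?thesis using f g uv by (auto simp: linear_extensions_def)
    next
      case 3
      then have "(v, u) \<in> R\<^sup>+" by blast
      then have "f v < f u" "g v < g u" using f g uv by (auto simp: linear_extensions_def)
      then show ?thesis by simp
    next
      case 4
      then show ?thesis using eq unfolding induced_orientation_def by blast
    qed simp
  qed
  show "f = g"
  proof
    fix x show "f x = g x"
      using bij_eq_if_same_order[OF fin _ _ same_order, where u = x] f g
      by (cases "x \<in> V") (auto simp: linear_extensions_def)
  qed
qed

lemma card_linear_extensions_le: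
  assumes "simple_graph V E" "R \<in> acyclic_orientations E"
  shows "card (linear_extensions V R) \<le> card (acyclic_orientations (compl_graph V E))"
proof (rule card_inj_on_le)
  show "inj_on (\<lambda>f. induced_orientation f (compl_graph V E)) (linear_extensions V R)"
    using inj_on_orient_complement[OF assms(1)] assms(2) by (simp add: acyclic_orientations_def)
  show "(\<lambda>f. induced_orientation f (compl_graph V E)) ` linear_extensions V R
          \<subseteq> acyclic_orientations (compl_graph V E)"
    using linear_extension_orients_complement assms(1) by blast
  show "finite (acyclic_orientations (compl_graph V E))"
    using finite_acyclic_orientations compl_graph_props(3)[OF assms(1)] by blast
qed

text \<open>Non-adjacency is transitive: the combinatorial core of being complete multipartite.\<close>

definition nonadjacency_transitive :: "'a set \<Rightarrow> ('a \<times> 'a) set \<Rightarrow> bool" where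
  "nonadjacency_transitive V E \<longleftrightarrow>
     (\<forall>u\<in>V. \<forall>v\<in>V. \<forall>w\<in>V. (u, v) \<notin> E \<longrightarrow> (v, w) \<notin> E \<longrightarrow> (u, w) \<notin> E)"

text \<open>Two vertices lie in the same part iff they are non-adjacent (or equal).\<close>

definition same_part :: "'a set \<Rightarrow> ('a \<times> 'a) set \<Rightarrow> ('a \<times> 'a) set" where
  "same_part V E = {(u, v) \<in> V \<times> V. (u, v) \<notin> E}"

lemma equiv_same_part:
  assumes "simple_graph V E" "nonadjacency_transitive V E"
  shows "equiv V (same_part V E)"
proof (rule equivI)
  show "same_part V E \<subseteq> V \<times> V" by (auto simp: same_part_def)
  show "refl_on V (same_part V E)"
    using assms(1) by (auto simp: refl_on_def same_part_def simple_graph_def irrefl_def)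
  show "sym (same_part V E)"
    using assms(1) by (auto simp: sym_def same_part_def simple_graph_def)
  show "trans (same_part V E)"
    using assms(2) by (auto simp: trans_def same_part_def nonadjacency_transitive_def)
qed

text \<open>A simple graph on a nonempty vertex set is complete p-partite for some p in 1..n iff its
  non-adjacency is transitive; the parts are the classes of the relation same_part.\<close>

lemma complete_multipartite_iff_nonadjacency_transitive:
  assumes "simple_graph V E" "V \<noteq> {}"
  shows "(\<exists>p. 1 \<le> p \<and> p \<le> card V \<and> complete_multipartite V E p) \<longleftrightarrow>
         nonadjacency_transitive V E"
proof
  assume "\<exists>p. 1 \<le> p \<and> p \<le> card V \<and> complete_multipartite V E p"
  then obtain P where P: "partition_on V P"
    and adj: "\<forall>u\<in>V. \<forall>v\<in>V. (u, v) \<in> E \<longleftrightarrow> \<not> (\<exists>B\<in>P. u \<in> B \<and> v \<in> B)"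
    unfolding complete_multipartite_def by blast
  show "nonadjacency_transitive V E" unfolding nonadjacency_transitive_def
  proof (intro ballI impI)
    fix u v w assume V: "u \<in> V" "v \<in> V" "w \<in> V" and uv: "(u, v) \<notin> E" and vw: "(v, w) \<notin> E"
    obtain B where "B \<in> P" "u \<in> B" "v \<in> B" using adj V uv by blast
    moreover obtain B' where "B' \<in> P" "v \<in> B'" "w \<in> B'" using adj V vw by blast
    moreover have "disjoint P" using P by (simp add: partition_on_def)
    ultimately have "B = B'" by (auto simp: disjoint_def)
    then show "(u, w) \<notin> E" using adj V \<open>B \<in> P\<close> \<open>u \<in> B\<close> \<open>w \<in> B'\<close> by blast
  qed
next
  assume "nonadjacency_transitive V E"
  then have eqv: "equiv V (same_part V E)" using equiv_same_part assms(1) by blast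
  define P where "P = V // same_part V E"
  have fin: "finite V" using assms(1) by (simp add: simple_graph_def)
  have "P = (\<lambda>u. same_part V E `` {u}) ` V" by (auto simp: P_def quotient_def)
  then have card_le: "card P \<le> card V" using card_image_le[OF fin] by simp
  have finP: "finite P" unfolding P_def
    by (rule finite_quotient[OF fin]) (auto simp: same_part_def)
  moreover have "P \<noteq> {}" using assms(2) by (simp add: P_def)
  ultimately have card_ge: "1 \<le> card P" by (simp add: Suc_le_eq card_gt_0_iff)
  have adj: "(u, v) \<in> E \<longleftrightarrow> \<not> (\<exists>B\<in>P. u \<in> B \<and> v \<in> B)" if uv: "u \<in> V" "v \<in> V" for u v
  proof -
    have "(\<exists>B\<in>P. u \<in> B \<and> v \<in> B) \<longleftrightarrow> (u, v) \<in> same_part V E"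
    proof
      show "(u, v) \<in> same_part V E" if "\<exists>B\<in>P. u \<in> B \<and> v \<in> B"
        using that in_quotient_imp_in_rel[OF eqv] unfolding P_def by blast
      show "\<exists>B\<in>P. u \<in> B \<and> v \<in> B" if "(u, v) \<in> same_part V E"
      proof
        show "same_part V E `` {u} \<in> P" unfolding P_def using uv(1) by (rule quotientI)
        show "u \<in> same_part V E `` {u} \<and> v \<in> same_part V E `` {u}"
          using equiv_class_self[OF eqv uv(1)] that by simp
      qed
    qed
    then show ?thesis using uv by (auto simp: same_part_def)
  qed
  show "\<exists>p. 1 \<le> p \<and> p \<le> card V \<and> complete_multipartite V E p"
    unfolding complete_multipartite_def
    using partition_on_quotient[OF eqv] finP card_le card_ge adj by (auto simp: P_def)
qed

lemma part_labelling:
  assumes "simple_graph V E" "nonadjacency_transitive V E"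
  obtains h :: "'a \<Rightarrow> nat" where "\<And>u v. u \<in> V \<Longrightarrow> v \<in> V \<Longrightarrow> (u, v) \<in> E \<longleftrightarrow> h u \<noteq> h v"
proof -
  have eqv: "equiv V (same_part V E)" using equiv_same_part assms by blast
  have "finite (V // same_part V E)"
    using assms(1) by (intro finite_quotient) (auto simp: simple_graph_def same_part_def)
  then obtain i :: "'a set \<Rightarrow> nat" where i: "inj_on i (V // same_part V E)"
    using finite_imp_inj_to_nat_seg by blast
  define h where "h u = i (same_part V E `` {u})" for u
  have "(u, v) \<in> E \<longleftrightarrow> h u \<noteq> h v" if "u \<in> V" "v \<in> V" for u v
  proof -
    have "h u = h v \<longleftrightarrow> same_part V E `` {u} = same_part V E `` {v}"
      unfolding h_def using i that by (auto simp: quotientI inj_on_eq_iff)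
    also have "\<dots> \<longleftrightarrow> (u, v) \<notin> E"
      using eq_equiv_class_iff[OF eqv that] that by (simp add: same_part_def)
    finally show ?thesis by blast
  qed
  then show ?thesis using that by blast
qed

text \<open>Equality case, surjectivity: orient each edge of a graph by a part labelling h.  For any
  acyclic orientation Q of the complement (whose arcs stay inside parts), R together with Q
  is acyclic, being contained in the lexicographic order of (label, Q); a topological sort
  of it is a linear extension of R that induces Q.\<close>

lemma orient_complement_onto:
  fixes h :: "'a \<Rightarrow> nat"
  assumes sg: "simple_graph V E"
    and parts: "\<And>u v. u \<in> V \<Longrightarrow> v \<in> V \<Longrightarrow> (u, v) \<in> E \<longleftrightarrow> h u \<noteq> h v"
    and Q: "Q \<in> acyclic_orientations (compl_graph V E)"
  shows "Q \<in> (\<lambda>f. induced_orientation f (compl_graph V E)) ` linear_extensions V (induced_orientation h E)"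
proof -
  define R where "R = induced_orientation h E"
  have fin: "finite V" and EV: "E \<subseteq> V \<times> V"
    using sg by (auto simp: simple_graph_def)
  have QO: "orientation (compl_graph V E) Q" and "acyclic Q"
    using Q by (auto simp: acyclic_orientations_def)
  have QC: "Q \<subseteq> compl_graph V E" using QO by (simp add: orientation_def)
  have "finite Q" using QC compl_graph_props(3)[OF sg] by (rule finite_subset)
  then have "wf Q" using \<open>acyclic Q\<close> by (rule finite_acyclic_wf)
  have "h x < h y" if "(x, y) \<in> R" for x y using that by (simp add: R_def induced_orientation_def)
  moreover have "h x = h y" if "(x, y) \<in> Q" for x y
    using that QC parts by (auto simp: compl_graph_def)
  ultimately have "R \<union> Q \<subseteq> inv_image (less_than <*lex*> Q) (\<lambda>x. (h x, x))" by auto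
  moreover have "wf (inv_image (less_than <*lex*> Q) (\<lambda>x. (h x, x)))"
    using \<open>wf Q\<close> by (simp add: wf_lex_prod)
  ultimately have "acyclic (R \<union> Q)" by (meson wf_acyclic wf_subset)
  moreover have RQV: "R \<union> Q \<subseteq> V \<times> V"
    using EV QC compl_graph_props(2)[OF sg] by (auto simp: R_def induced_orientation_def)
  ultimately obtain f where f: "f \<in> linear_extensions V (R \<union> Q)"
    using topological_sort[OF fin] by blast
  then have "f \<in> linear_extensions V R" using linear_extensions_antimono by blast
  moreover have "induced_orientation f (compl_graph V E) = Q"
    using QO linear_extension_increasing[OF f RQV] by (intro induced_orientation_eq) auto
  ultimately show ?thesis by (auto simp: R_def)
qed

lemma card_linear_extensions_eq:
  fixes h :: "'a \<Rightarrow> nat"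
  assumes sg: "simple_graph V E"
    and parts: "\<And>u v. u \<in> V \<Longrightarrow> v \<in> V \<Longrightarrow> (u, v) \<in> E \<longleftrightarrow> h u \<noteq> h v"
  shows "induced_orientation h E \<in> acyclic_orientations E"
    and "card (linear_extensions V (induced_orientation h E)) =
         card (acyclic_orientations (compl_graph V E))"
proof -
  define R where "R = induced_orientation h E"
  let ?\<Phi> = "\<lambda>f. induced_orientation f (compl_graph V E)"
  have EV: "E \<subseteq> V \<times> V" and symE: "sym E" using sg by (auto simp: simple_graph_def)
  show RA: "induced_orientation h E \<in> acyclic_orientations E"
  proof (rule induced_orientation_in_acyclic_orientations[OF symE])
    fix x y assume "(x, y) \<in> E"
    with EV show "h x \<noteq> h y" using parts by blast
  qed
  have "?\<Phi> ` linear_extensions V R \<subseteq> acyclic_orientations (compl_graph V E)"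
    using linear_extension_orients_complement[OF sg] by blast
  then have "finite (?\<Phi> ` linear_extensions V R)"
    using finite_acyclic_orientations[OF compl_graph_props(3)[OF sg]] by (rule finite_subset)
  then have "card (acyclic_orientations (compl_graph V E)) \<le> card (?\<Phi> ` linear_extensions V R)"
    using orient_complement_onto[OF sg parts] by (intro card_mono) (auto simp: R_def)
  also have "\<dots> = card (linear_extensions V R)"
    using RA inj_on_orient_complement[OF sg] by (intro card_image) (simp add: R_def acyclic_orientations_def)
  finally show "card (linear_extensions V (induced_orientation h E)) =
         card (acyclic_orientations (compl_graph V E))"
    using card_linear_extensions_le[OF sg RA] by (simp add: R_def)
qed

text \<open>The witness for strictness: if R contains an arc from a to c while c, v and v, a are
  non-adjacent, then the orientation of the complement induced by a linear extension of the
  path c, v, a is not induced by any linear extension of R, which would force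
  c < v < a < c.\<close>

lemma orientation_missed_by_linear_extensions:
  assumes sg: "simple_graph V E" and ac: "(a, c) \<in> R" "a \<noteq> c"
    and cvC: "(c, v) \<in> compl_graph V E" and vaC: "(v, a) \<in> compl_graph V E"
  obtains Q where "Q \<in> acyclic_orientations (compl_graph V E)"
    and "Q \<notin> (\<lambda>f. induced_orientation f (compl_graph V E)) ` linear_extensions V R"
proof -
  let ?\<Phi> = "\<lambda>f. induced_orientation f (compl_graph V E)"
  have fin: "finite V" using sg by (simp add: simple_graph_def)
  have V: "a \<in> V" "c \<in> V" "v \<in> V" and "c \<noteq> v" "v \<noteq> a"
    using cvC vaC by (auto simp: compl_graph_def)
  define T where "T = {(c, v), (v, a)}"
  have "T \<subseteq> measure (\<lambda>x. if x = c then 0 else if x = v then 1 else 2::nat)"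
    using \<open>a \<noteq> c\<close> \<open>c \<noteq> v\<close> \<open>v \<noteq> a\<close> by (auto simp: T_def)
  then have "acyclic T" by (meson wf_acyclic wf_measure wf_subset)
  moreover have "T \<subseteq> V \<times> V" using V by (auto simp: T_def)
  ultimately obtain f0 where f0: "f0 \<in> linear_extensions V T"
    using topological_sort[OF fin] by blast
  have f0_order: "f0 c < f0 v" "f0 v < f0 a"
    using f0 V by (auto simp: linear_extensions_def T_def)
  have "?\<Phi> f0 \<in> acyclic_orientations (compl_graph V E)"
    using sg f0 by (rule linear_extension_orients_complement)
  moreover have "?\<Phi> f0 \<notin> ?\<Phi> ` linear_extensions V R"
  proof
    assume "?\<Phi> f0 \<in> ?\<Phi> ` linear_extensions V R"
    then obtain f where f: "f \<in> linear_extensions V R" and "?\<Phi> f0 = ?\<Phi> f" by blast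
    then have "f c < f v" "f v < f a"
      using cvC vaC f0_order by (auto simp: induced_orientation_def)
    moreover have "f a < f c" using f ac(1) V by (auto simp: linear_extensions_def)
    ultimately show False by simp
  qed
  ultimately show ?thesis using that by blast
qed

text \<open>Strict case: if non-adjacency is not transitive, take u, v, w with uv and vw non-edges
  and uw an edge; whichever way R orients uw, the previous lemma shows that the injection
  from linear extensions of R misses an acyclic orientation of the complement.\<close>

lemma card_linear_extensions_less:
  assumes sg: "simple_graph V E" and not_trans: "\<not> nonadjacency_transitive V E"
    and RA: "R \<in> acyclic_orientations E"
  shows "card (linear_extensions V R) < card (acyclic_orientations (compl_graph V E))"
proof -
  let ?\<Phi> = "\<lambda>f. induced_orientation f (compl_graph V E)"
  have symE: "sym E" and irE: "irrefl E" using sg by (auto simp: simple_graph_def)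
  have RO: "orientation E R" using RA by (simp add: acyclic_orientations_def)
  obtain u v w where uvw: "u \<in> V" "v \<in> V" "w \<in> V" "(u, v) \<notin> E" "(v, w) \<notin> E" "(u, w) \<in> E"
    using not_trans unfolding nonadjacency_transitive_def by blast
  obtain a c where ac: "(a, c) \<in> R" "(a = u \<and> c = w) \<or> (a = w \<and> c = u)"
    using RO uvw(6) unfolding orientation_def by blast
  have "(a, c) \<in> E" using ac(1) RO by (auto simp: orientation_def)
  moreover have "(a, v) \<notin> E" "(v, a) \<notin> E" "(c, v) \<notin> E" "(v, c) \<notin> E"
    using ac(2) uvw symE by (auto simp: sym_def)
  ultimately have "a \<noteq> c" "(c, v) \<in> compl_graph V E" "(v, a) \<in> compl_graph V E"
    using ac(2) uvw irE by (auto simp: irrefl_def compl_graph_def)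
  then obtain Q where "Q \<in> acyclic_orientations (compl_graph V E)" "Q \<notin> ?\<Phi> ` linear_extensions V R"
    using orientation_missed_by_linear_extensions[OF sg ac(1)] by blast
  moreover have "?\<Phi> ` linear_extensions V R \<subseteq> acyclic_orientations (compl_graph V E)"
    using linear_extension_orients_complement[OF sg] by blast
  ultimately have "card (?\<Phi> ` linear_extensions V R) < card (acyclic_orientations (compl_graph V E))"
    using finite_acyclic_orientations[OF compl_graph_props(3)[OF sg]]
    by (intro psubset_card_mono) auto
  also have "card (?\<Phi> ` linear_extensions V R) = card (linear_extensions V R)"
    using inj_on_orient_complement[OF sg RO] by (rule card_image)
  finally show ?thesis .
qed

text \<open>Every simple graph has an acyclic orientation, e.g. one induced by an enumeration of V.\<close>

lemma acyclic_orientations_nonempty: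
  assumes "simple_graph V E"
  shows "acyclic_orientations E \<noteq> {}"
proof -
  have fin: "finite V" and EV: "E \<subseteq> V \<times> V" and symE: "sym E" and irE: "irrefl E"
    using assms by (auto simp: simple_graph_def)
  obtain idx :: "'a \<Rightarrow> nat" where idx: "inj_on idx V"
    using finite_imp_inj_to_nat_seg[OF fin] by blast
  have "induced_orientation idx E \<in> acyclic_orientations E"
  proof (rule induced_orientation_in_acyclic_orientations[OF symE])
    fix x y assume "(x, y) \<in> E"
    with EV irE idx show "idx x \<noteq> idx y" by (auto simp: irrefl_def dest: inj_onD)
  qed
  then show ?thesis by blast
qed

lemma finite_edges: "simple_graph V E \<Longrightarrow> finite E"
  unfolding simple_graph_def by (meson finite_SigmaI finite_subset)

lemma eps_attained:
  assumes "simple_graph V E"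
  obtains R where "R \<in> acyclic_orientations E" and "eps V E = card (linear_extensions V R)"
proof -
  have "eps V E \<in> (\<lambda>R. card (linear_extensions V R)) ` acyclic_orientations E"
    unfolding eps_def using acyclic_orientations_nonempty[OF assms] finite_edges[OF assms]
    by (intro Max_in finite_imageI finite_acyclic_orientations) auto
  then show ?thesis using that by blast
qed

lemma card_linear_extensions_le_eps:
  assumes "simple_graph V E" "R \<in> acyclic_orientations E"
  shows "card (linear_extensions V R) \<le> eps V E"
  unfolding eps_def using assms(2) finite_edges[OF assms(1)]
  by (intro Max_ge finite_imageI finite_acyclic_orientations) auto

theorem proposition4p7:
  fixes V :: "'a set" and E :: "('a \<times> 'a) set"
  assumes "simple_graph V E" and "V \<noteq> {}"
  shows "eps V E \<le> card (acyclic_orientations (compl_graph V E)) \<and>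
         (eps V E = card (acyclic_orientations (compl_graph V E)) \<longleftrightarrow>
           (\<exists>p. 1 \<le> p \<and> p \<le> card V \<and> complete_multipartite V E p))"
proof -
  let ?N = "card (acyclic_orientations (compl_graph V E))"
  obtain R0 where R0: "R0 \<in> acyclic_orientations E" and eps: "eps V E = card (linear_extensions V R0)"
    using eps_attained[OF assms(1)] .
  have bound: "eps V E \<le> ?N" using card_linear_extensions_le[OF assms(1) R0] eps by simp
  have "eps V E = ?N \<longleftrightarrow> nonadjacency_transitive V E"
  proof
    assume "eps V E = ?N"
    then show "nonadjacency_transitive V E"
      using card_linear_extensions_less[OF assms(1) _ R0] eps by auto
  next
    assume "nonadjacency_transitive V E"
    then obtain h :: "'a \<Rightarrow> nat" where "\<And>u v. u \<in> V \<Longrightarrow> v \<in> V \<Longrightarrow> (u, v) \<in> E \<longleftrightarrow> h u \<noteq> h v"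
      using part_labelling[OF assms(1)] by blast
    note optimal = card_linear_extensions_eq[OF assms(1) this]
    show "eps V E = ?N"
      using card_linear_extensions_le_eps[OF assms(1) optimal(1)] optimal(2) bound by simp
  qed
  then show ?thesis
    using bound complete_multipartite_iff_nonadjacency_transitive[OF assms] by simp
qed

end
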